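(* Let $G_1$ and $G_2$ be vertex-disjoint finite simple graphs and let $G=G_1*G_2$ be their join. If $G$ is not a complete multipartite graph, then (a) ${\rm v}(I_c(G))=\min\{{\rm v}(I_c(G_1))+|V(G_2)|,\ {\rm v}(I_c(G_2))+|V(G_1)|\}$, and (b) ${\rm v}(I_c(G))={\rm v}(I_c(G_1))+|V(G_2)|$ if $G_2$ is a discrete graph (has no edges).
   Context: The join $G_1*G_2$ consists of $G_1\cup G_2$ together with all edges joining a vertex of $G_1$ with a vertex of $G_2$. A graph is complete multipartite if it is a join $H_1*\cdots*H_k$, $k\ge2$, of pairwise vertex-disjoint graphs without edges. For a graph $H$ with vertex set $\{t_1,\ldots,t_n\}$, $I_c(H)$ is the ideal of $K[t_1,\ldots,t_n]$ ($K$ a field) generated by $\prod_{t_i\in C}t_i$ over all minimal vertex covers $C$ of $H$ (vertex cover: subset of vertices meeting every edge). For a graded ideal $I$ of a standard graded polynomial ring $R$, ${\rm v}(I)=\min\{d\ge0:\exists f\in R_d,\ \exists\mathfrak p\in{\rm Ass}(I),\ (I\colon f)=\mathfrak p\}$. *)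

theory Defs
  imports "HOL-Library.Poly_Mapping" "HOL-Library.Extended_Nat"
begin

definition simple_graph :: "'v set \<Rightarrow> 'v set set \<Rightarrow> bool" where
  "simple_graph V E \<longleftrightarrow> finite V \<and> (\<forall>e\<in>E. e \<subseteq> V \<and> card e = 2)"

definition join_edges :: "'v set \<Rightarrow> 'v set set \<Rightarrow> 'v set \<Rightarrow> 'v set set \<Rightarrow> 'v set set" where
  "join_edges V1 E1 V2 E2 = E1 \<union> E2 \<union> {{a, b} | a b. a \<in> V1 \<and> b \<in> V2}"

text \<open>Complete multipartite: the join of k >= 2 pairwise vertex-disjoint (nonempty)
  edgeless graphs, i.e. a partition of V into k >= 2 nonempty blocks such that the edges
  are exactly the pairs of vertices lying in different blocks.\<close>

definition complete_multipartite :: "'v set \<Rightarrow> 'v set set \<Rightarrow> bool" where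
  "complete_multipartite V E \<longleftrightarrow>
     (\<exists>P. finite P \<and> card P \<ge> 2 \<and> (\<forall>B\<in>P. B \<noteq> {}) \<and> \<Union>P = V \<and>
          (\<forall>B\<in>P. \<forall>B'\<in>P. B \<noteq> B' \<longrightarrow> B \<inter> B' = {}) \<and>
          E = {{a, b} | a b. \<exists>B\<in>P. \<exists>B'\<in>P. B \<noteq> B' \<and> a \<in> B \<and> b \<in> B'})"

definition vertex_cover :: "'v set \<Rightarrow> 'v set set \<Rightarrow> 'v set \<Rightarrow> bool" where
  "vertex_cover V E C \<longleftrightarrow> C \<subseteq> V \<and> (\<forall>e\<in>E. e \<inter> C \<noteq> {})"

definition minimal_vertex_cover :: "'v set \<Rightarrow> 'v set set \<Rightarrow> 'v set \<Rightarrow> bool" where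
  "minimal_vertex_cover V E C \<longleftrightarrow>
     vertex_cover V E C \<and> (\<forall>C'. C' \<subset> C \<longrightarrow> \<not> vertex_cover V E C')"

text \<open>Polynomials in variables indexed by 'v with coefficients in 'k are elements of
  ('v =>0 nat) =>0 k; the ring K[t_v : v in V] is the subring of
  polynomials involving only variables from V.\<close>

type_synonym ('v, 'k) mpoly = "('v \<Rightarrow>\<^sub>0 nat) \<Rightarrow>\<^sub>0 'k"

definition poly_ring :: "'v set \<Rightarrow> ('v, 'k::field) mpoly set" where
  "poly_ring V = {f. \<forall>m\<in>Poly_Mapping.keys f. Poly_Mapping.keys m \<subseteq> V}"

definition var :: "'v \<Rightarrow> ('v, 'k::field) mpoly" where
  "var v = Poly_Mapping.single (Poly_Mapping.single v 1) 1"

definition mdeg :: "('v \<Rightarrow>\<^sub>0 nat) \<Rightarrow> nat" where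
  "mdeg m = (\<Sum>v\<in>Poly_Mapping.keys m. Poly_Mapping.lookup m v)"

definition homog_comp :: "'v set \<Rightarrow> nat \<Rightarrow> ('v, 'k::field) mpoly set" where
  "homog_comp V d = {f \<in> poly_ring V. \<forall>m\<in>Poly_Mapping.keys f. mdeg m = d}"

definition is_ideal :: "'v set \<Rightarrow> ('v, 'k::field) mpoly set \<Rightarrow> bool" where
  "is_ideal V I \<longleftrightarrow> I \<subseteq> poly_ring V \<and> 0 \<in> I \<and> (\<forall>f\<in>I. \<forall>g\<in>I. f + g \<in> I) \<and>
     (\<forall>r\<in>poly_ring V. \<forall>f\<in>I. r * f \<in> I)"

definition ideal_gen :: "'v set \<Rightarrow> ('v, 'k::field) mpoly set \<Rightarrow> ('v, 'k) mpoly set" where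
  "ideal_gen V S = \<Inter>{I. is_ideal V I \<and> S \<subseteq> I}"

definition prime_ideal :: "'v set \<Rightarrow> ('v, 'k::field) mpoly set \<Rightarrow> bool" where
  "prime_ideal V P \<longleftrightarrow> is_ideal V P \<and> P \<noteq> poly_ring V \<and>
     (\<forall>f\<in>poly_ring V. \<forall>g\<in>poly_ring V. f * g \<in> P \<longrightarrow> f \<in> P \<or> g \<in> P)"

definition colon :: "'v set \<Rightarrow> ('v, 'k::field) mpoly set \<Rightarrow> ('v, 'k) mpoly \<Rightarrow> ('v, 'k) mpoly set" where
  "colon V I f = {g \<in> poly_ring V. g * f \<in> I}"

definition Ass :: "'v set \<Rightarrow> ('v, 'k::field) mpoly set \<Rightarrow> ('v, 'k) mpoly set set" where
  "Ass V I = {P. prime_ideal V P \<and> (\<exists>f\<in>poly_ring V. colon V I f = P)}"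

text \<open>The v-number; value \<infinity> when no such d exists (e.g. I the unit ideal).\<close>

definition v_number :: "'v set \<Rightarrow> ('v, 'k::field) mpoly set \<Rightarrow> enat" where
  "v_number V I =
     (if \<exists>d. \<exists>f\<in>homog_comp V d. \<exists>P\<in>Ass V I. colon V I f = P
      then enat (LEAST d. \<exists>f\<in>homog_comp V d. \<exists>P\<in>Ass V I. colon V I f = P)
      else \<infinity>)"

definition cover_ideal :: "'v set \<Rightarrow> 'v set set \<Rightarrow> ('v, 'k::field) mpoly set" where
  "cover_ideal V E = ideal_gen V {(\<Prod>v\<in>C. var v) | C. minimal_vertex_cover V E C}"

end

theory Submission
  imports Defs
begin

(*
  The cover ideal J of a graph consists of the polynomials all of whose monomials are supported
  on vertex covers, and its associated primes are the ideals (t_a, t_b) of the edges {a, b}.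
  If (J : f) is prime for f homogeneous of degree d, then (J : f) lies in (t_a, t_b) for every
  edge {a, b} with f outside (t_a, t_b); applying primality to the product of a transversal of
  these edges shows that there is only one such edge. A monomial of f outside (t_a, t_b) then
  has a support A of size at most d that misses {a, b} and meets every other edge. Conversely
  (J : t^A) = (t_a, t_b) for every such A, so v(J) is the least size of a vertex set that misses
  one edge and meets all the others.

  In the join G1 * G2 such a set either misses an edge of G1 and then consists of V2 together
  with such a set for G1 (or symmetrically), or it misses a cross edge {a, b} and then contains
  all vertices but a and b. The latter is never smaller than the former once some G_i has an
  edge, and this is the case because G is not complete multipartite.
*)

section \<open>Polynomials in arbitrary variables\<close>

lemma keys_add_canonically_ordered:
  fixes p q :: "'a \<Rightarrow>\<^sub>0 'b::canonically_ordered_monoid_add"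
  shows "Poly_Mapping.keys (p + q) = Poly_Mapping.keys p \<union> Poly_Mapping.keys q"
  by (auto simp: in_keys_iff lookup_add)

lemma sum_single_lookup:
  "(\<Sum>m\<in>Poly_Mapping.keys p. Poly_Mapping.single m (Poly_Mapping.lookup p m)) = p"
  by (rule poly_mapping_eqI) (simp add: lookup_sum lookup_single when_def in_keys_iff)

lemma lookup_mult_unique_sum:
  fixes f g :: "'a::monoid_add \<Rightarrow>\<^sub>0 'b::semiring_0"
  assumes unique: "\<And>a' b'. a' \<in> Poly_Mapping.keys f \<Longrightarrow> b' \<in> Poly_Mapping.keys g \<Longrightarrow>
      a' + b' = a + b \<Longrightarrow> a' = a \<and> b' = b"
  shows "Poly_Mapping.lookup (f * g) (a + b) = Poly_Mapping.lookup f a * Poly_Mapping.lookup g b"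
proof -
  have "Poly_Mapping.lookup (f * g) (a + b)
      = (\<Sum>(x, y). Poly_Mapping.lookup f x * Poly_Mapping.lookup g y when a + b = x + y)"
    by (simp add: lookup_mult prod_fun_def [symmetric] prod_fun_unfold_prod)
  also have "\<dots> = (\<Sum>xy. (case xy of (x, y) \<Rightarrow> Poly_Mapping.lookup f x * Poly_Mapping.lookup g y)
      when xy = (a, b))"
  proof (rule Sum_any.cong, clarify)
    fix x y
    have "Poly_Mapping.lookup f x * Poly_Mapping.lookup g y = 0"
      if "a + b = x + y" "(x, y) \<noteq> (a, b)"
      using unique[of x y] that by (metis in_keys_iff mult_zero_left mult_zero_right)
    then show "(Poly_Mapping.lookup f x * Poly_Mapping.lookup g y when a + b = x + y)
        = (Poly_Mapping.lookup f x * Poly_Mapping.lookup g y when (x, y) = (a, b))"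
      by (auto simp: when_def)
  qed
  also have "\<dots> = Poly_Mapping.lookup f a * Poly_Mapping.lookup g b"
    by simp
  finally show ?thesis .
qed

fun radix_value :: "'v list \<Rightarrow> nat \<Rightarrow> ('v \<Rightarrow>\<^sub>0 nat) \<Rightarrow> nat" where
  "radix_value [] B m = 0"
| "radix_value (x # xs) B m = Poly_Mapping.lookup m x + B * radix_value xs B m"

lemma radix_value_add: "radix_value xs B (m + m') = radix_value xs B m + radix_value xs B m'"
  by (induction xs) (simp_all add: lookup_add algebra_simps)

lemma radix_value_inj:
  assumes "\<And>x. Poly_Mapping.lookup m x < B" "\<And>x. Poly_Mapping.lookup m' x < B"
    and "Poly_Mapping.keys m \<subseteq> set xs" "Poly_Mapping.keys m' \<subseteq> set xs"
    and "radix_value xs B m = radix_value xs B m'"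
  shows "m = m'"
proof -
  have "\<forall>x\<in>set xs. Poly_Mapping.lookup m x = Poly_Mapping.lookup m' x"
    using assms(5)
  proof (induction xs)
    case (Cons y ys)
    let ?c = "Poly_Mapping.lookup m y" and ?c' = "Poly_Mapping.lookup m' y"
    have "(?c + B * radix_value ys B m) mod B = (?c' + B * radix_value ys B m') mod B"
      using Cons.prems by simp
    then have "?c = ?c'"
      using assms(1,2) by simp
    moreover have "B > 0"
      using assms(1)[of y] by linarith
    ultimately have "radix_value ys B m = radix_value ys B m'"
      using Cons.prems by simp
    with \<open>?c = ?c'\<close> show ?case
      using Cons.IH by simp
  qed simp
  then show ?thesis
    using assms(3,4) by (intro poly_mapping_eqI) (metis in_keys_iff subsetD)
qed

lemma lookup_le_mdeg: "Poly_Mapping.lookup m x \<le> mdeg m"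
  unfolding mdeg_def
  by (cases "x \<in> Poly_Mapping.keys m") (auto intro: member_le_sum simp: in_keys_iff)

lemma additive_weight_inj_on:
  assumes "finite K"
  shows "\<exists>w :: ('v \<Rightarrow>\<^sub>0 nat) \<Rightarrow> nat. (\<forall>m m'. w (m + m') = w m + w m') \<and> inj_on w K"
proof -
  obtain xs where xs: "set xs = (\<Union>m\<in>K. Poly_Mapping.keys m)"
    using assms finite_list by (metis finite_UN_I finite_keys)
  define B where "B = Suc (\<Sum>m\<in>K. mdeg m)"
  have "Poly_Mapping.lookup m x < B" if "m \<in> K" for m x
    using lookup_le_mdeg[of m x] member_le_sum[OF that, of mdeg] assms
    unfolding B_def by simp
  then have "inj_on (radix_value xs B) K"
    using xs by (intro inj_onI radix_value_inj) auto
  then show ?thesis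
    using radix_value_add by blast
qed

lemma ex_greatest_weight_if_finite:
  fixes w :: "'a \<Rightarrow> 'b::linorder"
  assumes "finite A" and "A \<noteq> {}"
  shows "\<exists>a\<in>A. \<forall>a'\<in>A. w a' \<le> w a"
proof -
  have "Max (w ` A) \<in> w ` A"
    using assms by simp
  then obtain a where "a \<in> A" and "w a = Max (w ` A)"
    by auto
  then show ?thesis
    using assms by (auto intro!: bexI[of _ a])
qed

(* The variable type carries no linear order, so leading terms are taken with respect to an
   additive weight that is injective on the finitely many exponents involved. *)
lemma mpoly_mult_neq_zero:
  fixes f g :: "('v \<Rightarrow>\<^sub>0 nat) \<Rightarrow>\<^sub>0 'k::semiring_no_zero_divisors"
  assumes "f \<noteq> 0" and "g \<noteq> 0"
  shows "f * g \<noteq> 0"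
proof -
  have "finite (Poly_Mapping.keys f \<union> Poly_Mapping.keys g)"
    by simp
  then obtain w :: "('v \<Rightarrow>\<^sub>0 nat) \<Rightarrow> nat" where w_add: "\<forall>m m'. w (m + m') = w m + w m'"
    and w_inj: "inj_on w (Poly_Mapping.keys f \<union> Poly_Mapping.keys g)"
    using additive_weight_inj_on by blast
  obtain a where a: "a \<in> Poly_Mapping.keys f" "\<And>a'. a' \<in> Poly_Mapping.keys f \<Longrightarrow> w a' \<le> w a"
    using ex_greatest_weight_if_finite[of "Poly_Mapping.keys f" w] assms(1) by auto
  obtain b where b: "b \<in> Poly_Mapping.keys g" "\<And>b'. b' \<in> Poly_Mapping.keys g \<Longrightarrow> w b' \<le> w b"
    using ex_greatest_weight_if_finite[of "Poly_Mapping.keys g" w] assms(2) by auto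
  have "a' = a \<and> b' = b"
    if "a' \<in> Poly_Mapping.keys f" "b' \<in> Poly_Mapping.keys g" "a' + b' = a + b" for a' b'
  proof -
    have "w a' + w b' = w a + w b"
      using that(3) w_add by (metis (no_types))
    then have "w a' = w a" "w b' = w b"
      using a(2)[OF that(1)] b(2)[OF that(2)] by linarith+
    then show ?thesis
      using w_inj that(1,2) a(1) b(1) by (auto dest: inj_onD)
  qed
  then have "Poly_Mapping.lookup (f * g) (a + b)
      = Poly_Mapping.lookup f a * Poly_Mapping.lookup g b"
    by (rule lookup_mult_unique_sum)
  also have "\<dots> \<noteq> 0"
    using a(1) b(1) by (simp add: in_keys_iff)
  finally show ?thesis
    by auto
qed

lemma zero_in_poly_ring: "0 \<in> poly_ring V"
  by (simp add: poly_ring_def)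

lemma one_in_poly_ring: "1 \<in> poly_ring V"
  by (simp add: poly_ring_def)

lemma poly_ring_add: "f \<in> poly_ring V \<Longrightarrow> g \<in> poly_ring V \<Longrightarrow> f + g \<in> poly_ring V"
  unfolding poly_ring_def using keys_add[of f g] by blast

lemma poly_ring_mult: "f \<in> poly_ring V \<Longrightarrow> g \<in> poly_ring V \<Longrightarrow> f * g \<in> poly_ring V"
  unfolding poly_ring_def using keys_mult[of f g] by (fastforce simp: keys_add_canonically_ordered)

lemma single_in_poly_ring: "Poly_Mapping.keys m \<subseteq> V \<Longrightarrow> Poly_Mapping.single m c \<in> poly_ring V"
  unfolding poly_ring_def by simp

lemma var_in_poly_ring: "v \<in> V \<Longrightarrow> var v \<in> poly_ring V"
  unfolding var_def by (rule single_in_poly_ring) simp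

definition sqfree_monom :: "'v set \<Rightarrow> 'v \<Rightarrow>\<^sub>0 nat" where
  "sqfree_monom C = (\<Sum>v\<in>C. Poly_Mapping.single v 1)"

lemma lookup_sqfree_monom:
  "finite C \<Longrightarrow> Poly_Mapping.lookup (sqfree_monom C) v = (if v \<in> C then 1 else 0)"
  unfolding sqfree_monom_def by (simp add: lookup_sum lookup_single when_def)

lemma keys_sqfree_monom: "finite C \<Longrightarrow> Poly_Mapping.keys (sqfree_monom C) = C"
  by (auto simp: in_keys_iff lookup_sqfree_monom split: if_splits)

lemma mdeg_sqfree_monom: "finite C \<Longrightarrow> mdeg (sqfree_monom C) = card C"
  unfolding mdeg_def by (simp add: keys_sqfree_monom lookup_sqfree_monom)

lemma prod_var_eq_single_sqfree_monom:
  "finite C \<Longrightarrow> (\<Prod>v\<in>C. var v) = (Poly_Mapping.single (sqfree_monom C) 1 :: ('v, 'k::field) mpoly)"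
  by (induction C rule: finite_induct) (simp_all add: sqfree_monom_def var_def mult_single)

lemma card_keys_le_mdeg: "card (Poly_Mapping.keys m) \<le> mdeg m"
proof -
  have "card (Poly_Mapping.keys m) = (\<Sum>v\<in>Poly_Mapping.keys m. 1)"
    by simp
  also have "\<dots> \<le> mdeg m"
    unfolding mdeg_def by (rule sum_mono) (simp add: in_keys_iff Suc_le_eq)
  finally show ?thesis .
qed

section \<open>Prime ideals generated by variables\<close>

lemma one_notin_prime_ideal:
  assumes "prime_ideal V P"
  shows "(1 :: ('v, 'k::field) mpoly) \<notin> P"
proof
  assume "1 \<in> P"
  then have "r \<in> P" if "r \<in> poly_ring V" for r
    using assms that unfolding prime_ideal_def is_ideal_def by (metis mult.right_neutral)
  then show False
    using assms unfolding prime_ideal_def is_ideal_def by blast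
qed

lemma prime_ideal_prod_mem:
  assumes "prime_ideal V (P :: ('v, 'k::field) mpoly set)" and "finite S"
    and "\<And>s. s \<in> S \<Longrightarrow> h s \<in> poly_ring V" and "prod h S \<in> P"
  shows "\<exists>s\<in>S. h s \<in> P"
  using assms(2-)
proof (induction S rule: finite_induct)
  case empty
  then show ?case
    using one_notin_prime_ideal[OF assms(1)] by simp
next
  case (insert x F)
  have "prod h F \<in> poly_ring V"
    using insert.prems(1) by (induction F rule: infinite_finite_induct)
      (auto intro: one_in_poly_ring poly_ring_mult)
  then have "h x \<in> P \<or> prod h F \<in> P"
    using assms(1) insert unfolding prime_ideal_def by simp
  then show ?case
    using insert by blast
qed

(* The ideal (t_v : v \<in> S), described by its monomials. *)
definition var_ideal :: "'v set \<Rightarrow> ('v, 'k::zero) mpoly set" where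
  "var_ideal S = {g. \<forall>m\<in>Poly_Mapping.keys g. Poly_Mapping.keys m \<inter> S \<noteq> {}}"

lemma zero_in_var_ideal: "0 \<in> var_ideal S"
  by (simp add: var_ideal_def)

lemma one_notin_var_ideal: "(1 :: ('v, 'k::zero_neq_one) mpoly) \<notin> var_ideal S"
  by (simp add: var_ideal_def)

lemma var_ideal_add: "f \<in> var_ideal S \<Longrightarrow> g \<in> var_ideal S \<Longrightarrow> f + g \<in> var_ideal S"
  unfolding var_ideal_def using keys_add[of f g] by blast

lemma var_ideal_diff:
  "f \<in> var_ideal S \<Longrightarrow> g \<in> var_ideal S \<Longrightarrow> f - g \<in> (var_ideal S :: ('v, 'k::ab_group_add) mpoly set)"
  unfolding var_ideal_def using keys_diff[of f g] by blast

lemma var_ideal_mult_left: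
  "g \<in> var_ideal S \<Longrightarrow> f * g \<in> (var_ideal S :: ('v, 'k::semiring_0) mpoly set)"
  unfolding var_ideal_def using keys_mult[of f g] by (fastforce simp: keys_add_canonically_ordered)

lemma var_ideal_mult_right:
  "f \<in> var_ideal S \<Longrightarrow> f * g \<in> (var_ideal S :: ('v, 'k::comm_semiring_0) mpoly set)"
  using var_ideal_mult_left[of f S g] by (simp add: mult.commute)

lemma var_in_var_ideal_iff: "var s \<in> (var_ideal S :: ('v, 'k::field) mpoly set) \<longleftrightarrow> s \<in> S"
  by (simp add: var_ideal_def var_def)

lemma sqfree_monom_in_var_ideal_iff:
  "finite C \<Longrightarrow> Poly_Mapping.single (sqfree_monom C) (1::'k::zero_neq_one) \<in> var_ideal S \<longleftrightarrow> C \<inter> S \<noteq> {}"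
  by (simp add: var_ideal_def keys_sqfree_monom)

lemma var_ideal_decompose:
  fixes f :: "('v, 'k::comm_monoid_add) mpoly"
  obtains f0 f1 where "f = f0 + f1" and "f1 \<in> var_ideal S"
    and "\<And>m. m \<in> Poly_Mapping.keys f0 \<Longrightarrow> Poly_Mapping.keys m \<inter> S = {}"
proof -
  define T where "T = {m :: 'v \<Rightarrow>\<^sub>0 nat. Poly_Mapping.keys m \<inter> S = {}}"
  define part where "part m = Poly_Mapping.single m (Poly_Mapping.lookup f m)" for m
  have "f = sum part (Poly_Mapping.keys f)"
    unfolding part_def by (rule sum_single_lookup[symmetric])
  also have "\<dots> = sum part (Poly_Mapping.keys f \<inter> T) + sum part (Poly_Mapping.keys f - T)"
    by (rule sum.Int_Diff) simp
  finally have "f = sum part (Poly_Mapping.keys f \<inter> T) + sum part (Poly_Mapping.keys f - T)" .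
  moreover have "sum part (Poly_Mapping.keys f - T) \<in> var_ideal S"
    using keys_sum[of part "Poly_Mapping.keys f - T"] unfolding var_ideal_def T_def part_def
    by (fastforce split: if_splits)
  moreover have "Poly_Mapping.keys m \<inter> S = {}"
    if "m \<in> Poly_Mapping.keys (sum part (Poly_Mapping.keys f \<inter> T))" for m
    using that keys_sum[of part "Poly_Mapping.keys f \<inter> T"] unfolding T_def part_def
    by (fastforce split: if_splits)
  ultimately show ?thesis
    using that by blast
qed

lemma var_ideal_prime:
  fixes f g :: "('v, 'k::idom) mpoly"
  assumes "f * g \<in> var_ideal S"
  shows "f \<in> var_ideal S \<or> g \<in> var_ideal S"
proof (rule ccontr)
  assume not_in: "\<not> (f \<in> var_ideal S \<or> g \<in> var_ideal S)"
  obtain f0 f1 where f: "f = f0 + f1" "f1 \<in> var_ideal S"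
    and f0: "\<And>m. m \<in> Poly_Mapping.keys f0 \<Longrightarrow> Poly_Mapping.keys m \<inter> S = {}"
    using var_ideal_decompose[of f S] by blast
  obtain g0 g1 where g: "g = g0 + g1" "g1 \<in> var_ideal S"
    and g0: "\<And>m. m \<in> Poly_Mapping.keys g0 \<Longrightarrow> Poly_Mapping.keys m \<inter> S = {}"
    using var_ideal_decompose[of g S] by blast
  have "f0 \<noteq> 0"
    using not_in f by auto
  moreover have "g0 \<noteq> 0"
    using not_in g by auto
  ultimately have "f0 * g0 \<noteq> 0"
    by (rule mpoly_mult_neq_zero)
  then obtain m where m: "m \<in> Poly_Mapping.keys (f0 * g0)"
    by (metis all_not_in_conv keys_eq_empty)
  have "f0 * g1 + f1 * g0 + f1 * g1 \<in> var_ideal S"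
    using f(2) g(2) by (intro var_ideal_add var_ideal_mult_left var_ideal_mult_right)
  then have "f * g - (f0 * g1 + f1 * g0 + f1 * g1) \<in> var_ideal S"
    using assms by (rule var_ideal_diff[rotated])
  moreover have "f * g - (f0 * g1 + f1 * g0 + f1 * g1) = f0 * g0"
    using f(1) g(1) by (simp add: algebra_simps)
  ultimately have "Poly_Mapping.keys m \<inter> S \<noteq> {}"
    using m unfolding var_ideal_def by simp
  moreover obtain a b where "a \<in> Poly_Mapping.keys f0" "b \<in> Poly_Mapping.keys g0" "m = a + b"
    using m keys_mult by blast
  ultimately show False
    using f0 g0 by (auto simp: keys_add_canonically_ordered)
qed

lemma prime_ideal_var_ideal:
  "prime_ideal V (poly_ring V \<inter> var_ideal S :: ('v, 'k::field) mpoly set)"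
proof -
  have "is_ideal V (poly_ring V \<inter> var_ideal S :: ('v, 'k) mpoly set)"
    unfolding is_ideal_def
    by (simp add: zero_in_poly_ring zero_in_var_ideal poly_ring_add var_ideal_add poly_ring_mult
        var_ideal_mult_left)
  moreover have "(1 :: ('v, 'k) mpoly) \<in> poly_ring V - var_ideal S"
    by (simp add: one_in_poly_ring one_notin_var_ideal)
  ultimately show ?thesis
    unfolding prime_ideal_def using var_ideal_prime by blast
qed

section \<open>Cover ideals\<close>

lemma ideal_sum_mem: "is_ideal V I \<Longrightarrow> (\<And>x. x \<in> S \<Longrightarrow> h x \<in> I) \<Longrightarrow> sum h S \<in> I"
  by (induction S rule: infinite_finite_induct) (simp_all add: is_ideal_def)

definition covering_polys :: "'v set \<Rightarrow> 'v set set \<Rightarrow> ('v, 'k::field) mpoly set" where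
  "covering_polys V E =
     {g \<in> poly_ring V. \<forall>m\<in>Poly_Mapping.keys g. vertex_cover V E (Poly_Mapping.keys m)}"

lemma is_ideal_covering_polys: "is_ideal V (covering_polys V E :: ('v, 'k::field) mpoly set)"
  unfolding is_ideal_def
proof (intro conjI ballI)
  show "covering_polys V E \<subseteq> poly_ring V"
    by (auto simp: covering_polys_def)
  show "0 \<in> covering_polys V E"
    by (simp add: covering_polys_def zero_in_poly_ring)
next
  fix f g :: "('v, 'k) mpoly"
  assume "f \<in> covering_polys V E" "g \<in> covering_polys V E"
  then show "f + g \<in> covering_polys V E"
    using keys_add[of f g] poly_ring_add unfolding covering_polys_def by blast
next
  fix r g :: "('v, 'k) mpoly"
  assume r: "r \<in> poly_ring V" and g: "g \<in> covering_polys V E"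
  have "vertex_cover V E (Poly_Mapping.keys m)" if m: "m \<in> Poly_Mapping.keys (r * g)" for m
  proof -
    obtain a b where ab: "a \<in> Poly_Mapping.keys r" "b \<in> Poly_Mapping.keys g" "m = a + b"
      using m keys_mult by blast
    have "Poly_Mapping.keys a \<subseteq> V"
      using r ab(1) unfolding poly_ring_def by blast
    moreover have "vertex_cover V E (Poly_Mapping.keys b)"
      using g ab(2) unfolding covering_polys_def by blast
    ultimately show ?thesis
      unfolding vertex_cover_def ab(3) keys_add_canonically_ordered by blast
  qed
  then show "r * g \<in> covering_polys V E"
    using r g poly_ring_mult unfolding covering_polys_def by blast
qed

lemma covering_polys_subset_var_ideal: "e \<in> E \<Longrightarrow> covering_polys V E \<subseteq> var_ideal e"
  unfolding covering_polys_def var_ideal_def vertex_cover_def by blast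

lemma vertex_cover_contains_minimal:
  assumes "finite V" and "vertex_cover V E C"
  shows "\<exists>C'\<subseteq>C. minimal_vertex_cover V E C'"
proof -
  have "finite C"
    using assms unfolding vertex_cover_def by (blast intro: finite_subset)
  then show ?thesis
    using assms(2)
  proof (induction C rule: finite_psubset_induct)
    case (psubset C)
    show ?case
    proof (cases "minimal_vertex_cover V E C")
      case False
      then obtain B where "B \<subset> C" and "vertex_cover V E B"
        using psubset.prems unfolding minimal_vertex_cover_def by blast
      then show ?thesis
        using psubset.IH by (meson psubset_imp_subset order.trans)
    qed blast
  qed
qed

lemma covering_polys_subset_ideal:
  fixes I :: "('v, 'k::field) mpoly set"
  assumes "finite V" and I: "is_ideal V I"
    and gens: "\<And>C. minimal_vertex_cover V E C \<Longrightarrow> Poly_Mapping.single (sqfree_monom C) 1 \<in> I"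
  shows "covering_polys V E \<subseteq> I"
proof
  fix g :: "('v, 'k) mpoly"
  assume g: "g \<in> covering_polys V E"
  have "Poly_Mapping.single m (Poly_Mapping.lookup g m) \<in> I" if m: "m \<in> Poly_Mapping.keys g" for m
  proof -
    have "vertex_cover V E (Poly_Mapping.keys m)"
      using g m unfolding covering_polys_def by blast
    then obtain C where C: "C \<subseteq> Poly_Mapping.keys m" "minimal_vertex_cover V E C"
      using vertex_cover_contains_minimal[OF assms(1)] by blast
    then have "finite C"
      using finite_keys finite_subset by blast
    then have "m = (m - sqfree_monom C) + sqfree_monom C"
      using C(1) by (intro poly_mapping_eqI)
        (auto simp: lookup_add lookup_minus lookup_sqfree_monom in_keys_iff)
    then have "Poly_Mapping.single m (Poly_Mapping.lookup g m)
        = Poly_Mapping.single (m - sqfree_monom C) (Poly_Mapping.lookup g m)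
          * Poly_Mapping.single (sqfree_monom C) 1"
      by (metis mult_single mult.right_neutral)
    moreover have "Poly_Mapping.keys m \<subseteq> V"
      using g m unfolding covering_polys_def poly_ring_def by blast
    then have "Poly_Mapping.single (m - sqfree_monom C) (Poly_Mapping.lookup g m) \<in> poly_ring V"
      by (intro single_in_poly_ring) (auto simp: in_keys_iff lookup_minus)
    ultimately show ?thesis
      using I gens[OF C(2)] unfolding is_ideal_def by simp
  qed
  then have "(\<Sum>m\<in>Poly_Mapping.keys g. Poly_Mapping.single m (Poly_Mapping.lookup g m)) \<in> I"
    by (rule ideal_sum_mem[OF I])
  then show "g \<in> I"
    by (simp only: sum_single_lookup)
qed

lemma cover_ideal_eq_covering_polys:
  assumes "finite V"
  shows "cover_ideal V E = (covering_polys V E :: ('v, 'k::field) mpoly set)"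
proof -
  define gens :: "('v, 'k) mpoly set" where
    "gens = {(\<Prod>v\<in>C. var v) | C. minimal_vertex_cover V E C}"
  have gen_eq: "(\<Prod>v\<in>C. var v) = (Poly_Mapping.single (sqfree_monom C) 1 :: ('v, 'k) mpoly)"
    and gen_cover:
      "Poly_Mapping.single (sqfree_monom C) 1 \<in> (covering_polys V E :: ('v, 'k) mpoly set)"
    if "minimal_vertex_cover V E C" for C
  proof -
    have "finite C" "vertex_cover V E C"
      using assms that unfolding minimal_vertex_cover_def vertex_cover_def
      by (auto intro: finite_subset)
    then show "(\<Prod>v\<in>C. var v) = (Poly_Mapping.single (sqfree_monom C) 1 :: ('v, 'k) mpoly)"
      and "Poly_Mapping.single (sqfree_monom C) 1 \<in> (covering_polys V E :: ('v, 'k) mpoly set)"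
      unfolding covering_polys_def vertex_cover_def
      by (auto simp: prod_var_eq_single_sqfree_monom keys_sqfree_monom single_in_poly_ring)
  qed
  have "ideal_gen V gens \<subseteq> covering_polys V E"
    unfolding ideal_gen_def gens_def using is_ideal_covering_polys gen_eq gen_cover by fastforce
  moreover have "covering_polys V E \<subseteq> ideal_gen V gens"
    unfolding ideal_gen_def gens_def
    using covering_polys_subset_ideal[OF assms] gen_eq by fastforce
  ultimately show ?thesis
    unfolding cover_ideal_def gens_def by blast
qed

section \<open>The v-number of a cover ideal\<close>

definition avoiding_cover :: "'v set \<Rightarrow> 'v set set \<Rightarrow> 'v set \<Rightarrow> 'v set \<Rightarrow> bool" where
  "avoiding_cover V E e A \<longleftrightarrow> e \<in> E \<and> vertex_cover V (E - {e}) A \<and> A \<inter> e = {}"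

definition cover_v_number :: "'v set \<Rightarrow> 'v set set \<Rightarrow> enat" where
  "cover_v_number V E = (INF A \<in> {A. \<exists>e. avoiding_cover V E e A}. enat (card A))"

lemma antichain_transversal:
  assumes "finite F" and antichain: "\<And>x y. x \<in> F \<Longrightarrow> y \<in> F \<Longrightarrow> x \<subseteq> y \<Longrightarrow> x = y"
    and "e0 \<in> F" "e1 \<in> F" "e0 \<noteq> e1"
  obtains S where "finite S" "S \<subseteq> \<Union>F" "\<forall>e\<in>F. e \<inter> S \<noteq> {}" "\<forall>s\<in>S. \<exists>e\<in>F. s \<notin> e"
proof -
  define other where "other x = (if x = e0 then e1 else e0)" for x
  have other: "other x \<in> F" "\<not> x \<subseteq> other x" if "x \<in> F" for x
    using antichain assms(3-5) that unfolding other_def by auto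
  then have "\<forall>x\<in>F. \<exists>v. v \<in> x - other x"
    by blast
  then obtain c where c: "\<And>x. x \<in> F \<Longrightarrow> c x \<in> x - other x"
    by metis
  show thesis
  proof (rule that[of "c ` F"])
    show "finite (c ` F)"
      using assms(1) by simp
    show "c ` F \<subseteq> \<Union>F" "\<forall>e\<in>F. e \<inter> c ` F \<noteq> {}"
      using c by blast+
    show "\<forall>s\<in>c ` F. \<exists>e\<in>F. s \<notin> e"
      using c other(1) by blast
  qed
qed

lemma simple_graph_edges_antichain:
  assumes "simple_graph V E" "x \<in> E" "y \<in> E" "x \<subseteq> y"
  shows "x = y"
  using assms card_subset_eq[of y x] unfolding simple_graph_def
  by (metis card.infinite zero_neq_numeral)

lemma sqfree_monom_mult_mem_covering_polys:
  fixes f :: "('v, 'k::field) mpoly"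
  assumes "finite S" "S \<subseteq> V" and f: "f \<in> poly_ring V"
    and uncovered: "\<And>e. e \<in> E \<Longrightarrow> e \<inter> S = {} \<Longrightarrow> f \<in> var_ideal e"
  shows "Poly_Mapping.single (sqfree_monom S) 1 * f \<in> covering_polys V E"
proof -
  have "vertex_cover V E (Poly_Mapping.keys m)"
    if m: "m \<in> Poly_Mapping.keys (Poly_Mapping.single (sqfree_monom S) 1 * f)" for m
  proof -
    obtain a b where "a \<in> Poly_Mapping.keys (Poly_Mapping.single (sqfree_monom S) (1::'k))"
      and b: "b \<in> Poly_Mapping.keys f" and "m = a + b"
      using m keys_mult by blast
    then have "Poly_Mapping.keys m = S \<union> Poly_Mapping.keys b"
      using assms(1) by (simp add: keys_add_canonically_ordered keys_sqfree_monom)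
    moreover have "Poly_Mapping.keys b \<subseteq> V"
      using f b unfolding poly_ring_def by blast
    moreover have "Poly_Mapping.keys b \<inter> e \<noteq> {}" if "e \<in> E" "e \<inter> S = {}" for e
      using uncovered[OF that] b unfolding var_ideal_def by blast
    ultimately show ?thesis
      using assms(2) unfolding vertex_cover_def by blast
  qed
  moreover have "Poly_Mapping.single (sqfree_monom S) 1 \<in> poly_ring V"
    using assms(1,2) by (simp add: single_in_poly_ring keys_sqfree_monom)
  ultimately show ?thesis
    unfolding covering_polys_def using poly_ring_mult f by blast
qed

lemma colon_covering_polys_subset_var_ideal:
  fixes f :: "('v, 'k::field) mpoly"
  assumes "e \<in> E" and "f \<notin> var_ideal e"
  shows "colon V (covering_polys V E) f \<subseteq> var_ideal e"
proof
  fix g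
  assume "g \<in> colon V (covering_polys V E) f"
  then have "g * f \<in> var_ideal e"
    using covering_polys_subset_var_ideal[OF assms(1)] unfolding colon_def by blast
  then show "g \<in> var_ideal e"
    using var_ideal_prime assms(2) by blast
qed

lemma colon_sqfree_monom_avoiding_cover:
  assumes "finite V" and "avoiding_cover V E e A"
  shows "colon V (covering_polys V E) (Poly_Mapping.single (sqfree_monom A) 1)
    = (poly_ring V \<inter> var_ideal e :: ('v, 'k::field) mpoly set)"
proof -
  have A: "e \<in> E" "A \<subseteq> V" "A \<inter> e = {}" "\<And>e'. e' \<in> E \<Longrightarrow> e' \<inter> A = {} \<Longrightarrow> e' = e"
    using assms(2) unfolding avoiding_cover_def vertex_cover_def by auto
  then have "finite A"
    using assms(1) finite_subset by blast
  then have "Poly_Mapping.single (sqfree_monom A) 1 \<notin> (var_ideal e :: ('v, 'k) mpoly set)"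
    using A(3) by (simp add: sqfree_monom_in_var_ideal_iff Int_commute)
  then have "colon V (covering_polys V E) (Poly_Mapping.single (sqfree_monom A) 1)
      \<subseteq> poly_ring V \<inter> (var_ideal e :: ('v, 'k) mpoly set)"
    using colon_covering_polys_subset_var_ideal[OF A(1)] unfolding colon_def by blast
  moreover have "g \<in> colon V (covering_polys V E) (Poly_Mapping.single (sqfree_monom A) 1)"
    if "g \<in> poly_ring V \<inter> var_ideal e" for g :: "('v, 'k) mpoly"
    using that sqfree_monom_mult_mem_covering_polys[OF \<open>finite A\<close> A(2), of g E] A(4)
    unfolding colon_def by (auto simp: mult.commute)
  ultimately show ?thesis
    by blast
qed

lemma colon_prime_unique_edge_outside_var_ideal:
  fixes f :: "('v, 'k::field) mpoly"
  assumes G: "simple_graph V E" and f: "f \<in> poly_ring V"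
    and prime: "prime_ideal V (colon V (covering_polys V E) f)"
    and e0: "e0 \<in> E" "f \<notin> var_ideal e0" and e1: "e1 \<in> E" "f \<notin> var_ideal e1"
  shows "e0 = e1"
proof (rule ccontr)
  assume "e0 \<noteq> e1"
  define F where "F = {e \<in> E. f \<notin> var_ideal e}"
  have edges: "\<And>e. e \<in> E \<Longrightarrow> e \<subseteq> V" and "finite V"
    using G unfolding simple_graph_def by auto
  then have "finite E"
    using finite_subset[of E "Pow V"] by blast
  then have "finite F"
    unfolding F_def by simp
  moreover have "\<And>x y. x \<in> F \<Longrightarrow> y \<in> F \<Longrightarrow> x \<subseteq> y \<Longrightarrow> x = y"
    using simple_graph_edges_antichain[OF G] unfolding F_def by blast
  moreover have "e0 \<in> F" "e1 \<in> F"
    using e0 e1 unfolding F_def by simp_all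
  ultimately obtain S where S: "finite S" "S \<subseteq> \<Union>F" "\<forall>e\<in>F. e \<inter> S \<noteq> {}"
    "\<forall>s\<in>S. \<exists>e\<in>F. s \<notin> e"
    using \<open>e0 \<noteq> e1\<close> by (rule antichain_transversal)
  have SV: "S \<subseteq> V"
    using S(2) edges unfolding F_def by blast
  have "Poly_Mapping.single (sqfree_monom S) 1 * f \<in> covering_polys V E"
    using S(1,3) SV f by (intro sqfree_monom_mult_mem_covering_polys) (auto simp: F_def)
  then have "(\<Prod>s\<in>S. var s) \<in> colon V (covering_polys V E) f"
    using S(1) SV unfolding colon_def
    by (simp add: prod_var_eq_single_sqfree_monom single_in_poly_ring keys_sqfree_monom)
  moreover have "\<And>s. s \<in> S \<Longrightarrow> (var s :: ('v, 'k) mpoly) \<in> poly_ring V"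
    using SV by (auto intro: var_in_poly_ring)
  ultimately obtain s where s: "s \<in> S" "var s \<in> colon V (covering_polys V E) f"
    using prime_ideal_prod_mem[OF prime S(1)] by blast
  have "s \<in> e" if "e \<in> F" for e
  proof -
    have "var s \<in> (var_ideal e :: ('v, 'k) mpoly set)"
      using colon_covering_polys_subset_var_ideal[of e E f V] that s(2) unfolding F_def by blast
    then show ?thesis
      by (simp add: var_in_var_ideal_iff)
  qed
  then show False
    using S(4) s(1) by blast
qed

lemma avoiding_cover_of_prime_colon:
  fixes f :: "('v, 'k::field) mpoly"
  assumes G: "simple_graph V E" and f: "f \<in> homog_comp V d"
    and prime: "prime_ideal V (colon V (covering_polys V E) f)"
  shows "\<exists>e A. avoiding_cover V E e A \<and> card A \<le> d"
proof -
  have fR: "f \<in> poly_ring V" and deg: "\<And>m. m \<in> Poly_Mapping.keys f \<Longrightarrow> mdeg m = d"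
    using f unfolding homog_comp_def by auto
  have "f \<notin> covering_polys V E"
    using prime one_notin_prime_ideal one_in_poly_ring unfolding colon_def by fastforce
  then obtain m where m: "m \<in> Poly_Mapping.keys f" "\<not> vertex_cover V E (Poly_Mapping.keys m)"
    using fR unfolding covering_polys_def by blast
  moreover have mV: "Poly_Mapping.keys m \<subseteq> V"
    using fR m(1) unfolding poly_ring_def by blast
  ultimately obtain e where e: "e \<in> E" "e \<inter> Poly_Mapping.keys m = {}"
    unfolding vertex_cover_def by blast
  then have "f \<notin> var_ideal e"
    using m(1) unfolding var_ideal_def by (auto simp: Int_commute)
  then have "f \<in> var_ideal e'" if "e' \<in> E - {e}" for e'
    using colon_prime_unique_edge_outside_var_ideal[OF G fR prime e(1)] that by blast
  then have "avoiding_cover V E e (Poly_Mapping.keys m)"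
    using e mV m(1) unfolding avoiding_cover_def vertex_cover_def var_ideal_def
    by (auto simp: Int_commute)
  moreover have "card (Poly_Mapping.keys m) \<le> d"
    using card_keys_le_mdeg deg m(1) by metis
  ultimately show ?thesis
    by blast
qed

lemma enat_LEAST_eq_INF:
  assumes "\<And>d. P d \<Longrightarrow> \<exists>x\<in>S. f x \<le> d" and "\<And>x. x \<in> S \<Longrightarrow> P (f x)"
  shows "(if \<exists>d. P d then enat (LEAST d. P d) else \<infinity>) = (INF x\<in>S. enat (f x))"
proof (cases "\<exists>d. P d")
  case True
  then obtain x where "x \<in> S" "f x \<le> (LEAST d. P d)"
    using assms(1) LeastI_ex by blast
  then have "(INF x\<in>S. enat (f x)) \<le> enat (LEAST d. P d)"
    by (meson INF_lower2 enat_ord_simps(1))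
  moreover have "enat (LEAST d. P d) \<le> (INF x\<in>S. enat (f x))"
    using assms(2) by (auto intro!: INF_greatest Least_le)
  ultimately show ?thesis
    using True by simp
next
  case False
  then have "S = {}"
    using assms(2) by blast
  then show ?thesis
    using False by (simp add: top_enat_def)
qed

lemma v_number_cover_ideal:
  assumes G: "simple_graph V E"
  shows "v_number V (cover_ideal V E :: ('v, 'k::field) mpoly set) = cover_v_number V E"
proof -
  let ?I = "covering_polys V E :: ('v, 'k) mpoly set"
  have "finite V"
    using G unfolding simple_graph_def by simp
  have "v_number V (cover_ideal V E :: ('v, 'k) mpoly set)
      = (if \<exists>d. \<exists>f\<in>homog_comp V d. \<exists>P\<in>Ass V ?I. colon V ?I f = P
         then enat (LEAST d. \<exists>f\<in>homog_comp V d. \<exists>P\<in>Ass V ?I. colon V ?I f = P) else \<infinity>)"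
    unfolding v_number_def cover_ideal_eq_covering_polys[OF \<open>finite V\<close>] ..
  also have "\<dots> = cover_v_number V E"
    unfolding cover_v_number_def
  proof (rule enat_LEAST_eq_INF)
    fix d
    assume "\<exists>f\<in>homog_comp V d. \<exists>P\<in>Ass V ?I. colon V ?I f = P"
    then obtain f where "f \<in> homog_comp V d" "prime_ideal V (colon V ?I f)"
      unfolding Ass_def by force
    then show "\<exists>A\<in>{A. \<exists>e. avoiding_cover V E e A}. card A \<le> d"
      using avoiding_cover_of_prime_colon[OF G] by blast
  next
    fix A
    assume "A \<in> {A. \<exists>e. avoiding_cover V E e A}"
    then obtain e where e: "avoiding_cover V E e A"
      by blast
    define t :: "('v, 'k) mpoly" where "t = Poly_Mapping.single (sqfree_monom A) 1"
    have "A \<subseteq> V" "finite A"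
      using e \<open>finite V\<close> finite_subset unfolding avoiding_cover_def vertex_cover_def by auto
    then have "t \<in> homog_comp V (card A)"
      unfolding homog_comp_def t_def
      by (simp add: single_in_poly_ring keys_sqfree_monom mdeg_sqfree_monom)
    moreover have "prime_ideal V (colon V ?I t)"
      unfolding t_def colon_sqfree_monom_avoiding_cover[OF \<open>finite V\<close> e]
      by (rule prime_ideal_var_ideal)
    ultimately show "\<exists>f\<in>homog_comp V (card A). \<exists>P\<in>Ass V ?I. colon V ?I f = P"
      unfolding Ass_def homog_comp_def by blast
  qed
  finally show ?thesis .
qed

section \<open>Joins\<close>

lemma join_edges_commute: "join_edges V1 E1 V2 E2 = join_edges V2 E2 V1 E1"
  unfolding join_edges_def by (auto simp: insert_commute)

lemma simple_graph_join:
  assumes "simple_graph V1 E1" "simple_graph V2 E2" "V1 \<inter> V2 = {}"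
  shows "simple_graph (V1 \<union> V2) (join_edges V1 E1 V2 E2)"
proof -
  have "card {a, b} = 2" if "a \<in> V1" "b \<in> V2" for a b
  proof -
    have "a \<noteq> b"
      using that assms(3) by blast
    then show ?thesis
      by simp
  qed
  then show ?thesis
    using assms unfolding simple_graph_def join_edges_def by blast
qed

lemma complete_multipartite_join_edgeless:
  assumes "V1 \<noteq> {}" "V2 \<noteq> {}" "V1 \<inter> V2 = {}"
  shows "complete_multipartite (V1 \<union> V2) (join_edges V1 {} V2 {})"
  unfolding complete_multipartite_def
proof (intro exI[of _ "{V1, V2}"] conjI)
  have "V1 \<noteq> V2"
    using assms by blast
  then show "card {V1, V2} \<ge> 2"
    and "join_edges V1 {} V2 {}
      = {{a, b} |a b. \<exists>B\<in>{V1, V2}. \<exists>B'\<in>{V1, V2}. B \<noteq> B' \<and> a \<in> B \<and> b \<in> B'}"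
    unfolding join_edges_def by (auto simp: insert_commute)
qed (use assms in auto)

lemma cover_v_number_no_edges: "cover_v_number V {} = \<infinity>"
  by (simp add: cover_v_number_def avoiding_cover_def top_enat_def)

lemma avoiding_cover_complement_edge:
  assumes G: "simple_graph V E" and "e \<in> E"
  shows "avoiding_cover V E e (V - e)"
proof -
  have "e' \<inter> (V - e) \<noteq> {}" if "e' \<in> E - {e}" for e'
  proof -
    have "e' \<subseteq> V" "\<not> e' \<subseteq> e"
      using that G simple_graph_edges_antichain[OF G _ \<open>e \<in> E\<close>] unfolding simple_graph_def by auto
    then show ?thesis
      by blast
  qed
  then show ?thesis
    using \<open>e \<in> E\<close> unfolding avoiding_cover_def vertex_cover_def by auto
qed

lemma avoiding_cover_join_extend:
  assumes G1: "simple_graph V1 E1" and G2: "simple_graph V2 E2" and "V1 \<inter> V2 = {}"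
    and A: "avoiding_cover V1 E1 e A"
  shows "avoiding_cover (V1 \<union> V2) (join_edges V1 E1 V2 E2) e (A \<union> V2)"
proof -
  have "e' \<inter> (A \<union> V2) \<noteq> {}"
    if e': "e' \<in> join_edges V1 E1 V2 E2" and "e' \<noteq> e" for e'
  proof -
    consider "e' \<in> E1" | "e' \<in> E2" | a b where "b \<in> V2" "e' = {a, b}"
      using e' unfolding join_edges_def by blast
    then show ?thesis
    proof cases
      case 1
      then show ?thesis
        using A \<open>e' \<noteq> e\<close> unfolding avoiding_cover_def vertex_cover_def by blast
    next
      case 2
      then have "e' \<subseteq> V2" "e' \<noteq> {}"
        using G2 unfolding simple_graph_def by auto
      then show ?thesis
        by blast
    qed blast
  qed
  moreover have "e \<subseteq> V1"
    using A G1 unfolding avoiding_cover_def simple_graph_def by blast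
  moreover have "e \<in> join_edges V1 E1 V2 E2"
    using A unfolding avoiding_cover_def join_edges_def by blast
  ultimately show ?thesis
    using A \<open>V1 \<inter> V2 = {}\<close> unfolding avoiding_cover_def vertex_cover_def by blast
qed

lemma avoiding_cover_join_restrict:
  assumes G1: "simple_graph V1 E1" and "V1 \<inter> V2 = {}" and "e \<in> E1"
    and A: "avoiding_cover (V1 \<union> V2) (join_edges V1 E1 V2 E2) e A"
  shows "V2 \<subseteq> A" and "avoiding_cover V1 E1 e (A - V2)"
proof -
  have cover: "e' \<inter> A \<noteq> {}" if "e' \<in> join_edges V1 E1 V2 E2" "e' \<noteq> e" for e'
    using A that unfolding avoiding_cover_def vertex_cover_def by blast
  have e: "e \<subseteq> V1" "e \<noteq> {}"
    using G1 \<open>e \<in> E1\<close> unfolding simple_graph_def by auto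
  then obtain x where "x \<in> e"
    by blast
  show "V2 \<subseteq> A"
  proof
    fix v
    assume "v \<in> V2"
    then have "{x, v} \<in> join_edges V1 E1 V2 E2" "v \<notin> e"
      using \<open>x \<in> e\<close> e(1) \<open>V1 \<inter> V2 = {}\<close> unfolding join_edges_def by blast+
    then have "{x, v} \<inter> A \<noteq> {}"
      using cover by blast
    moreover have "x \<notin> A"
      using A \<open>x \<in> e\<close> unfolding avoiding_cover_def by blast
    ultimately show "v \<in> A"
      by blast
  qed
  have "e' \<inter> (A - V2) \<noteq> {}" if "e' \<in> E1" "e' \<noteq> e" for e'
  proof -
    have "e' \<subseteq> V1"
      using G1 that(1) unfolding simple_graph_def by blast
    moreover have "e' \<inter> A \<noteq> {}"
      using cover that unfolding join_edges_def by blast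
    ultimately show ?thesis
      using \<open>V1 \<inter> V2 = {}\<close> by blast
  qed
  then show "avoiding_cover V1 E1 e (A - V2)"
    using A \<open>e \<in> E1\<close> \<open>V1 \<inter> V2 = {}\<close> e(1)
    unfolding avoiding_cover_def vertex_cover_def by blast
qed

lemma avoiding_cover_join_cross:
  assumes "a \<in> V1" "b \<in> V2"
    and A: "avoiding_cover (V1 \<union> V2) (join_edges V1 E1 V2 E2) {a, b} A"
  shows "(V1 \<union> V2) - {a, b} \<subseteq> A"
proof
  fix v
  assume v: "v \<in> (V1 \<union> V2) - {a, b}"
  have cover: "e' \<inter> A \<noteq> {}" if "e' \<in> join_edges V1 E1 V2 E2" "e' \<noteq> {a, b}" for e'
    using A that unfolding avoiding_cover_def vertex_cover_def by blast
  have "a \<notin> A" "b \<notin> A"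
    using A unfolding avoiding_cover_def by auto
  consider "v \<in> V1" | "v \<in> V2"
    using v by blast
  then show "v \<in> A"
  proof cases
    case 1
    then have "{v, b} \<in> join_edges V1 E1 V2 E2" "{v, b} \<noteq> {a, b}"
      using v \<open>b \<in> V2\<close> unfolding join_edges_def by (auto simp: doubleton_eq_iff)
    then show ?thesis
      using cover \<open>b \<notin> A\<close> by blast
  next
    case 2
    then have "{a, v} \<in> join_edges V1 E1 V2 E2" "{a, v} \<noteq> {a, b}"
      using v \<open>a \<in> V1\<close> unfolding join_edges_def by (auto simp: doubleton_eq_iff)
    then show ?thesis
      using cover \<open>a \<notin> A\<close> by blast
  qed
qed

lemma enat_INF_attained:
  fixes f :: "'a \<Rightarrow> enat"
  assumes "S \<noteq> {}"
  shows "\<exists>x\<in>S. (INF x\<in>S. f x) = f x"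
proof -
  have "(INF x\<in>S. f x) \<in> f ` S"
    using assms unfolding Inf_enat_def by (auto intro: LeastI)
  then show ?thesis
    by auto
qed

lemma cover_v_number_join_le:
  assumes G1: "simple_graph V1 E1" and G2: "simple_graph V2 E2" and "V1 \<inter> V2 = {}"
  shows "cover_v_number (V1 \<union> V2) (join_edges V1 E1 V2 E2) \<le> cover_v_number V1 E1 + enat (card V2)"
proof (cases "\<exists>e A. avoiding_cover V1 E1 e A")
  case True
  then obtain e A where A: "avoiding_cover V1 E1 e A" and "cover_v_number V1 E1 = enat (card A)"
    using enat_INF_attained[of "{A. \<exists>e. avoiding_cover V1 E1 e A}" "\<lambda>A. enat (card A)"]
    unfolding cover_v_number_def by blast
  moreover have "card (A \<union> V2) = card A + card V2"
    using A G1 G2 \<open>V1 \<inter> V2 = {}\<close> unfolding avoiding_cover_def vertex_cover_def simple_graph_def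
    by (metis card_Un_disjoint disjoint_iff finite_subset subsetD)
  moreover have "cover_v_number (V1 \<union> V2) (join_edges V1 E1 V2 E2) \<le> enat (card (A \<union> V2))"
    using avoiding_cover_join_extend[OF G1 G2 \<open>V1 \<inter> V2 = {}\<close> A]
    unfolding cover_v_number_def by (blast intro: INF_lower)
  ultimately show ?thesis
    by simp
next
  case False
  then show ?thesis
    by (simp add: cover_v_number_def top_enat_def)
qed

lemma cover_v_number_join_ge:
  assumes G1: "simple_graph V1 E1" and G2: "simple_graph V2 E2" and "V1 \<inter> V2 = {}"
    and "E1 \<noteq> {}" and "e \<notin> E2"
    and A: "avoiding_cover (V1 \<union> V2) (join_edges V1 E1 V2 E2) e A"
  shows "cover_v_number V1 E1 + enat (card V2) \<le> enat (card A)"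
proof -
  have fin: "finite V1" "finite V2"
    using G1 G2 unfolding simple_graph_def by auto
  have "A \<subseteq> V1 \<union> V2"
    using A unfolding avoiding_cover_def vertex_cover_def by blast
  then have "finite A"
    using fin by (simp add: finite_subset)
  have "\<exists>n. cover_v_number V1 E1 \<le> enat n \<and> n + card V2 \<le> card A"
  proof (cases "e \<in> E1")
    case True
    have "cover_v_number V1 E1 \<le> enat (card (A - V2))"
      using avoiding_cover_join_restrict(2)[OF G1 \<open>V1 \<inter> V2 = {}\<close> True A]
      unfolding cover_v_number_def by (blast intro: INF_lower)
    moreover have "V2 \<subseteq> A"
      using avoiding_cover_join_restrict(1)[OF G1 \<open>V1 \<inter> V2 = {}\<close> True A] .
    then have "card (A - V2) + card V2 = card A"
      using \<open>finite A\<close> fin(2) by (simp add: card_Diff_subset card_mono)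
    ultimately show ?thesis
      by auto
  next
    case False
    then obtain a b where ab: "a \<in> V1" "b \<in> V2" "e = {a, b}"
      using A \<open>e \<notin> E2\<close> unfolding avoiding_cover_def join_edges_def by blast
    obtain e1 where e1: "e1 \<in> E1"
      using \<open>E1 \<noteq> {}\<close> by blast
    then have "e1 \<subseteq> V1" "card e1 = 2"
      using G1 unfolding simple_graph_def by auto
    moreover have "card e1 \<le> card V1"
      using \<open>e1 \<subseteq> V1\<close> fin(1) by (rule card_mono[rotated])
    ultimately have "card (V1 - e1) + 2 = card V1"
      using fin(1) by (simp add: card_Diff_subset finite_subset)
    moreover have "cover_v_number V1 E1 \<le> enat (card (V1 - e1))"
      using avoiding_cover_complement_edge[OF G1 e1] unfolding cover_v_number_def
      by (blast intro: INF_lower)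
    moreover have "card V1 + card V2 \<le> card A + 2"
    proof -
      have "card (V1 \<union> V2) \<le> card (A \<union> {a, b})"
        using avoiding_cover_join_cross[OF ab(1,2)] A ab(3) \<open>finite A\<close>
        by (intro card_mono) auto
      also have "\<dots> \<le> card A + card {a, b}"
        by (rule card_Un_le)
      also have "\<dots> \<le> card A + 2"
        by (cases "a = b") simp_all
      finally show ?thesis
        using fin \<open>V1 \<inter> V2 = {}\<close> by (simp add: card_Un_disjoint)
    qed
    ultimately show ?thesis
      by (intro exI[of _ "card (V1 - e1)"]) simp
  qed
  then obtain n where n: "cover_v_number V1 E1 \<le> enat n" "n + card V2 \<le> card A"
    by blast
  then have "cover_v_number V1 E1 + enat (card V2) \<le> enat n + enat (card V2)"
    by (intro add_right_mono)
  also have "\<dots> \<le> enat (card A)"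
    using n(2) by simp
  finally show ?thesis .
qed

lemma cover_v_number_join:
  assumes G1: "simple_graph V1 E1" and G2: "simple_graph V2 E2" and "V1 \<inter> V2 = {}"
    and "E1 \<noteq> {} \<or> E2 \<noteq> {}"
  shows "cover_v_number (V1 \<union> V2) (join_edges V1 E1 V2 E2)
    = min (cover_v_number V1 E1 + enat (card V2)) (cover_v_number V2 E2 + enat (card V1))"
proof (rule antisym)
  have "V2 \<inter> V1 = {}"
    using \<open>V1 \<inter> V2 = {}\<close> by blast
  show "cover_v_number (V1 \<union> V2) (join_edges V1 E1 V2 E2)
    \<le> min (cover_v_number V1 E1 + enat (card V2)) (cover_v_number V2 E2 + enat (card V1))"
    using cover_v_number_join_le[OF G1 G2 \<open>V1 \<inter> V2 = {}\<close>]
      cover_v_number_join_le[OF G2 G1 \<open>V2 \<inter> V1 = {}\<close>]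
    by (simp add: join_edges_commute Un_commute)
  have disjoint_edges: "e \<notin> E2" if "e \<in> E1" for e
  proof
    assume "e \<in> E2"
    then have "e \<subseteq> V1 \<inter> V2" "card e = 2"
      using that G1 G2 unfolding simple_graph_def by auto
    then show False
      using \<open>V1 \<inter> V2 = {}\<close> by simp
  qed
  have "min (cover_v_number V1 E1 + enat (card V2)) (cover_v_number V2 E2 + enat (card V1))
      \<le> enat (card A)"
    if A: "avoiding_cover (V1 \<union> V2) (join_edges V1 E1 V2 E2) e A" for e A
  proof -
    have A': "avoiding_cover (V2 \<union> V1) (join_edges V2 E2 V1 E1) e A"
      using A by (simp add: join_edges_commute Un_commute)
    consider "E1 \<noteq> {}" "e \<notin> E2" | "E2 \<noteq> {}" "e \<notin> E1"
      using disjoint_edges \<open>E1 \<noteq> {} \<or> E2 \<noteq> {}\<close> by blast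
    then show ?thesis
    proof cases
      case 1
      then show ?thesis
        using cover_v_number_join_ge[OF G1 G2 \<open>V1 \<inter> V2 = {}\<close> _ _ A] by (simp add: min.coboundedI1)
    next
      case 2
      then show ?thesis
        using cover_v_number_join_ge[OF G2 G1 \<open>V2 \<inter> V1 = {}\<close> _ _ A'] by (simp add: min.coboundedI2)
    qed
  qed
  then show "min (cover_v_number V1 E1 + enat (card V2)) (cover_v_number V2 E2 + enat (card V1))
    \<le> cover_v_number (V1 \<union> V2) (join_edges V1 E1 V2 E2)"
    unfolding cover_v_number_def[of "V1 \<union> V2"] by (blast intro: INF_greatest)
qed

theorem proposition3p12:
  fixes V1 V2 :: "'v set" and E1 E2 :: "'v set set"
  assumes "simple_graph V1 E1" and "simple_graph V2 E2"
    and "V1 \<noteq> {}" and "V2 \<noteq> {}"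
    and "V1 \<inter> V2 = {}"
    and "\<not> complete_multipartite (V1 \<union> V2) (join_edges V1 E1 V2 E2)"
  shows "v_number (V1 \<union> V2) (cover_ideal (V1 \<union> V2) (join_edges V1 E1 V2 E2) :: ('v, 'k::field) mpoly set)
           = min (v_number V1 (cover_ideal V1 E1 :: ('v, 'k) mpoly set) + enat (card V2))
                 (v_number V2 (cover_ideal V2 E2 :: ('v, 'k) mpoly set) + enat (card V1))
       \<and> (E2 = {} \<longrightarrow>
           v_number (V1 \<union> V2) (cover_ideal (V1 \<union> V2) (join_edges V1 E1 V2 E2) :: ('v, 'k) mpoly set)
           = v_number V1 (cover_ideal V1 E1 :: ('v, 'k) mpoly set) + enat (card V2))"
proof -
  have G: "simple_graph (V1 \<union> V2) (join_edges V1 E1 V2 E2)"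
    using assms(1,2,5) by (rule simple_graph_join)
  have "E1 \<noteq> {} \<or> E2 \<noteq> {}"
    using assms(6) complete_multipartite_join_edgeless[OF assms(3-5)] by auto
  then have "v_number (V1 \<union> V2)
        (cover_ideal (V1 \<union> V2) (join_edges V1 E1 V2 E2) :: ('v, 'k) mpoly set)
      = min (v_number V1 (cover_ideal V1 E1 :: ('v, 'k) mpoly set) + enat (card V2))
            (v_number V2 (cover_ideal V2 E2 :: ('v, 'k) mpoly set) + enat (card V1))"
    unfolding v_number_cover_ideal[OF G] v_number_cover_ideal[OF assms(1)]
      v_number_cover_ideal[OF assms(2)]
    by (rule cover_v_number_join[OF assms(1,2,5)])
  moreover have "E2 = {} \<Longrightarrow> v_number V2 (cover_ideal V2 E2 :: ('v, 'k) mpoly set) = \<infinity>"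
    using v_number_cover_ideal[OF assms(2)] cover_v_number_no_edges by metis
  ultimately show ?thesis
    by auto
qed

end
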